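(* Let $G$ be a non-elementary hyperbolic group and $M$ the maximum order of a finite subgroup of $G$. For every element $g\in G$ of infinite order, the commensurability class of $g$ contains at most $2M$ conjugacy classes of primitive elements.
   Context: Elements $g,h$ are commensurated if $k^{-1}g^mk=h^n$ for some $m,n\in\mathbb{Z}\setminus\{0\}$, $k\in G$. For $g$ of infinite order, $E^+_G(g)=\{h\mid h^{-1}g^mh=g^m\text{ for some }m\ne0\}$; $g$ is primitive if it has infinite order and $E^+_G(g)=\langle g\rangle F\cong\langle g\rangle\times F$ for some finite subgroup $F$. *)

theory Defs
  imports "HOL-Algebra.Algebra"
begin

definition word_prod :: "('a, 'b) monoid_scheme \<Rightarrow> 'a list \<Rightarrow> 'a" where
  "word_prod G ws = foldr (\<lambda>x y. x \<otimes>\<^bsub>G\<^esub> y) ws \<one>\<^bsub>G\<^esub>"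

definition finite_gen_set :: "('a, 'b) monoid_scheme \<Rightarrow> 'a set \<Rightarrow> bool" where
  "finite_gen_set G S \<longleftrightarrow> finite S \<and> S \<subseteq> carrier G \<and> generate G S = carrier G"

definition word_length :: "('a, 'b) monoid_scheme \<Rightarrow> 'a set \<Rightarrow> 'a \<Rightarrow> nat" where
  "word_length G S g = (LEAST n. \<exists>ws. length ws = n \<and>
      set ws \<subseteq> S \<union> (\<lambda>s. inv\<^bsub>G\<^esub> s) ` S \<and> word_prod G ws = g)"

definition word_dist :: "('a, 'b) monoid_scheme \<Rightarrow> 'a set \<Rightarrow> 'a \<Rightarrow> 'a \<Rightarrow> real" where
  "word_dist G S x y = real (word_length G S (inv\<^bsub>G\<^esub> x \<otimes>\<^bsub>G\<^esub> y))"

definition gromov_prod :: "('a, 'b) monoid_scheme \<Rightarrow> 'a set \<Rightarrow> 'a \<Rightarrow> 'a \<Rightarrow> 'a \<Rightarrow> real" where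
  "gromov_prod G S w x y = (word_dist G S x w + word_dist G S y w - word_dist G S x y) / 2"

definition hyperbolic_group :: "('a, 'b) monoid_scheme \<Rightarrow> bool" where
  "hyperbolic_group G \<longleftrightarrow> group G \<and> (\<exists>S \<delta>. finite_gen_set G S \<and> \<delta> \<ge> 0 \<and>
     (\<forall>x\<in>carrier G. \<forall>y\<in>carrier G. \<forall>z\<in>carrier G. \<forall>w\<in>carrier G.
        gromov_prod G S w x z \<ge> min (gromov_prod G S w x y) (gromov_prod G S w y z) - \<delta>))"

definition virtually_cyclic :: "('a, 'b) monoid_scheme \<Rightarrow> bool" where
  "virtually_cyclic G \<longleftrightarrow> (\<exists>h\<in>carrier G. finite (rcosets\<^bsub>G\<^esub> (generate G {h})))"

definition non_elementary_hyperbolic :: "('a, 'b) monoid_scheme \<Rightarrow> bool" where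
  "non_elementary_hyperbolic G \<longleftrightarrow> hyperbolic_group G \<and> \<not> virtually_cyclic G"

definition infinite_order :: "('a, 'b) monoid_scheme \<Rightarrow> 'a \<Rightarrow> bool" where
  "infinite_order G g \<longleftrightarrow> g \<in> carrier G \<and> (\<forall>n::nat. n > 0 \<longrightarrow> g [^]\<^bsub>G\<^esub> n \<noteq> \<one>\<^bsub>G\<^esub>)"

definition commensurated :: "('a, 'b) monoid_scheme \<Rightarrow> 'a \<Rightarrow> 'a \<Rightarrow> bool" where
  "commensurated G g h \<longleftrightarrow> g \<in> carrier G \<and> h \<in> carrier G \<and>
     (\<exists>(m::int) (n::int). m \<noteq> 0 \<and> n \<noteq> 0 \<and> (\<exists>k\<in>carrier G.
        inv\<^bsub>G\<^esub> k \<otimes>\<^bsub>G\<^esub> (g [^]\<^bsub>G\<^esub> m) \<otimes>\<^bsub>G\<^esub> k = h [^]\<^bsub>G\<^esub> n))"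

definition Eplus :: "('a, 'b) monoid_scheme \<Rightarrow> 'a \<Rightarrow> 'a set" where
  "Eplus G g = {h \<in> carrier G. \<exists>m::int. m \<noteq> 0 \<and>
       inv\<^bsub>G\<^esub> h \<otimes>\<^bsub>G\<^esub> (g [^]\<^bsub>G\<^esub> m) \<otimes>\<^bsub>G\<^esub> h = g [^]\<^bsub>G\<^esub> m}"

text \<open>g is primitive: E+(g) = <g>F, and multiplication <g> x F -> <g>F is an isomorphism
  (i.e. <g>F is the internal direct product of <g> and F), for some finite subgroup F.\<close>
definition primitive :: "('a, 'b) monoid_scheme \<Rightarrow> 'a \<Rightarrow> bool" where
  "primitive G g \<longleftrightarrow> infinite_order G g \<and>
     (\<exists>F. subgroup F G \<and> finite F \<and>
        Eplus G g = generate G {g} <#>\<^bsub>G\<^esub> F \<and>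
        (\<lambda>(x, y). x \<otimes>\<^bsub>G\<^esub> y) \<in> iso (G\<lparr>carrier := generate G {g}\<rparr> \<times>\<times> G\<lparr>carrier := F\<rparr>)
                                     (G\<lparr>carrier := Eplus G g\<rparr>))"

definition conj_class :: "('a, 'b) monoid_scheme \<Rightarrow> 'a \<Rightarrow> 'a set" where
  "conj_class G h = {inv\<^bsub>G\<^esub> k \<otimes>\<^bsub>G\<^esub> h \<otimes>\<^bsub>G\<^esub> k | k. k \<in> carrier G}"

end

theory Submission
  imports Defs
begin

text \<open>
  Fix a primitive h0 commensurated with g, with E+(h0) the direct product of the infinite
  cyclic group generated by h0 and a finite subgroup F0; the projection to the cyclic factor is a
  homomorphism from E+(h0) to the integers sending h0 to 1. For another such primitive h, some
  conjugate h' shares a nonzero power with h0, so h' lies in E+(h0), and primitivity of h gives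
  h0 = h'^j t with t of finite order. The projection kills t, hence sends h' to 1 or -1, so h' lies
  in h0 F0 or in h0^-1 F0: at most 2|F0| conjugacy classes.
  M is finite because finite subgroups of a hyperbolic group have bounded order: a finite subgroup
  moves a point of minimal orbit radius by at most 4 delta + 1, as otherwise the midpoint between
  that point and its translate would have smaller radius.
\<close>

section \<open>Conjugation, commensurability and the groups E+(g)\<close>

context group begin

lemma infinite_order_iff_ord_eq_0:
  "infinite_order G g \<longleftrightarrow> g \<in> carrier G \<and> ord g = 0"
  unfolding infinite_order_def using ord_eq_0 by auto

lemma infinite_order_int_pow_eq_one_iff:
  "infinite_order G g \<Longrightarrow> g [^] (n::int) = \<one> \<longleftrightarrow> n = 0"
  by (simp add: infinite_order_iff_ord_eq_0 int_pow_eq_id)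

lemma finite_subgroup_elem_torsion:
  assumes "subgroup F G" "finite F" "f \<in> F"
  shows "\<exists>n>0. f [^] (n::nat) = \<one>"
proof -
  interpret F: group "G\<lparr>carrier := F\<rparr>"
    using assms(1) by (rule subgroup.subgroup_is_group) (rule is_group)
  have "f [^]\<^bsub>G\<lparr>carrier := F\<rparr>\<^esub> F.ord f = \<one>"
    using assms(3) by (simp add: F.pow_ord_eq_1)
  moreover have "F.ord f > 0"
    using F.ord_ge_1 assms by (simp add: Suc_le_eq)
  ultimately show ?thesis
    by (metis nat_pow_consistent)
qed

lemma conj_hom: "k \<in> carrier G \<Longrightarrow> (\<lambda>x. inv k \<otimes> x \<otimes> k) \<in> hom G G"
  by (rule homI) (simp_all add: m_assoc[symmetric], simp add: m_assoc)

lemma conj_int_pow: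
  "k \<in> carrier G \<Longrightarrow> x \<in> carrier G \<Longrightarrow> (inv k \<otimes> x \<otimes> k) [^] (n::int) = inv k \<otimes> x [^] n \<otimes> k"
  using hom_int_pow[OF conj_hom _ is_group is_group] by simp

lemma conj_nat_pow:
  "k \<in> carrier G \<Longrightarrow> x \<in> carrier G \<Longrightarrow> (inv k \<otimes> x \<otimes> k) [^] (n::nat) = inv k \<otimes> x [^] n \<otimes> k"
  using hom_nat_pow[OF conj_hom _ is_group is_group] by simp

lemma conj_conj:
  "k \<in> carrier G \<Longrightarrow> l \<in> carrier G \<Longrightarrow> x \<in> carrier G \<Longrightarrow>
     inv l \<otimes> (inv k \<otimes> x \<otimes> k) \<otimes> l = inv (k \<otimes> l) \<otimes> x \<otimes> (k \<otimes> l)"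
  by (simp add: inv_mult_group m_assoc)

lemma conj_eq_iff:
  "k \<in> carrier G \<Longrightarrow> x \<in> carrier G \<Longrightarrow> y \<in> carrier G \<Longrightarrow>
     inv k \<otimes> x \<otimes> k = y \<longleftrightarrow> x = k \<otimes> y \<otimes> inv k"
  by (metis conjugation_is_surj inv_closed inv_inv)

lemma conj_class_conj:
  assumes k: "k \<in> carrier G" and h: "h \<in> carrier G"
  shows "conj_class G (inv k \<otimes> h \<otimes> k) = conj_class G h"
proof (intro equalityI subsetI)
  fix z assume "z \<in> conj_class G (inv k \<otimes> h \<otimes> k)"
  then obtain l where l: "l \<in> carrier G" "z = inv l \<otimes> (inv k \<otimes> h \<otimes> k) \<otimes> l"
    unfolding conj_class_def by blast
  then have "z = inv (k \<otimes> l) \<otimes> h \<otimes> (k \<otimes> l)"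
    using conj_conj[OF k l(1) h] by simp
  then show "z \<in> conj_class G h"
    unfolding conj_class_def using k l(1) by blast
next
  fix z assume "z \<in> conj_class G h"
  then obtain l where l: "l \<in> carrier G" "z = inv l \<otimes> h \<otimes> l"
    unfolding conj_class_def by blast
  have "k \<otimes> (inv k \<otimes> l) = l"
    using k l(1) by (simp add: m_assoc[symmetric])
  then have "z = inv (inv k \<otimes> l) \<otimes> (inv k \<otimes> h \<otimes> k) \<otimes> (inv k \<otimes> l)"
    using conj_conj[OF k _ h, of "inv k \<otimes> l"] k l by simp
  then show "z \<in> conj_class G (inv k \<otimes> h \<otimes> k)"
    unfolding conj_class_def using k l(1) by blast
qed

lemma Eplus_subgroup:
  assumes g: "g \<in> carrier G"
  shows "subgroup (Eplus G g) G"
proof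
  show "Eplus G g \<subseteq> carrier G"
    unfolding Eplus_def by auto
  show "\<one> \<in> Eplus G g"
    unfolding Eplus_def using g by (auto intro!: exI[of _ 1])
next
  fix x y assume "x \<in> Eplus G g" "y \<in> Eplus G g"
  then obtain a b :: int where x: "x \<in> carrier G" "a \<noteq> 0" "inv x \<otimes> g [^] a \<otimes> x = g [^] a"
    and y: "y \<in> carrier G" "b \<noteq> 0" "inv y \<otimes> g [^] b \<otimes> y = g [^] b"
    unfolding Eplus_def by auto
  \<comment> \<open>both x and y centralise the common power g^(ab)\<close>
  have "inv x \<otimes> g [^] (a * b) \<otimes> x = g [^] (a * b)"
    using conj_int_pow[OF x(1), of "g [^] a" b] x g by (simp add: int_pow_pow)
  moreover have "inv y \<otimes> g [^] (a * b) \<otimes> y = g [^] (a * b)"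
    using conj_int_pow[OF y(1), of "g [^] b" a] y g by (simp add: int_pow_pow mult.commute)
  ultimately have "inv (x \<otimes> y) \<otimes> g [^] (a * b) \<otimes> (x \<otimes> y) = g [^] (a * b)"
    using conj_conj[OF x(1) y(1), of "g [^] (a * b)"] g by (metis int_pow_closed)
  then show "x \<otimes> y \<in> Eplus G g"
    unfolding Eplus_def using x y by (auto intro!: exI[of _ "a * b"])
next
  fix x assume "x \<in> Eplus G g"
  then obtain a :: int where x: "x \<in> carrier G" "a \<noteq> 0" "inv x \<otimes> g [^] a \<otimes> x = g [^] a"
    unfolding Eplus_def by auto
  then have "inv (inv x) \<otimes> g [^] a \<otimes> inv x = g [^] a"
    using g conj_eq_iff[of x "g [^] a" "g [^] a"] by simp
  then show "inv x \<in> Eplus G g"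
    unfolding Eplus_def using x by auto
qed

lemma mem_Eplus_of_pow_eq:
  assumes "x \<in> carrier G" "q \<noteq> 0" "x [^] (p::int) = y [^] (q::int)"
  shows "x \<in> Eplus G y"
proof -
  have "x [^] p \<otimes> x = x \<otimes> x [^] p"
    using assms(1) int_pow_mult[of x p 1] int_pow_mult[of x 1 p] by (simp add: add.commute)
  then have "inv x \<otimes> x [^] p \<otimes> x = x [^] p"
    using assms(1) by (simp add: m_assoc) (simp add: m_assoc[symmetric])
  then show ?thesis
    unfolding Eplus_def using assms by auto
qed

lemma commensurated_sym:
  assumes "commensurated G g h"
  shows "commensurated G h g"
proof -
  obtain m n :: int and k where "m \<noteq> 0" "n \<noteq> 0" "k \<in> carrier G"
    and "inv k \<otimes> g [^] m \<otimes> k = h [^] n"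
    using assms unfolding commensurated_def by blast
  moreover from this have "inv (inv k) \<otimes> h [^] n \<otimes> inv k = g [^] m"
    using assms conj_eq_iff unfolding commensurated_def by auto
  ultimately show ?thesis
    using assms unfolding commensurated_def by (meson inv_closed)
qed

lemma commensurated_trans:
  assumes "commensurated G a b" "commensurated G b c"
  shows "commensurated G a c"
proof -
  obtain m1 n1 :: int and k1 where 1: "m1 \<noteq> 0" "n1 \<noteq> 0" "k1 \<in> carrier G"
    "inv k1 \<otimes> a [^] m1 \<otimes> k1 = b [^] n1"
    using assms(1) unfolding commensurated_def by blast
  obtain m2 n2 :: int and k2 where 2: "m2 \<noteq> 0" "n2 \<noteq> 0" "k2 \<in> carrier G"
    "inv k2 \<otimes> b [^] m2 \<otimes> k2 = c [^] n2"
    using assms(2) unfolding commensurated_def by blast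
  have abc: "a \<in> carrier G" "b \<in> carrier G" "c \<in> carrier G"
    using assms unfolding commensurated_def by auto
  have "inv k1 \<otimes> a [^] (m1 * m2) \<otimes> k1 = b [^] (n1 * m2)"
    using conj_int_pow[OF 1(3), of "a [^] m1" m2] 1(4) abc by (simp add: int_pow_pow)
  moreover have "inv k2 \<otimes> b [^] (n1 * m2) \<otimes> k2 = c [^] (n2 * n1)"
    using conj_int_pow[OF 2(3), of "b [^] m2" n1] 2(4) abc by (simp add: int_pow_pow mult.commute)
  ultimately have "inv (k1 \<otimes> k2) \<otimes> a [^] (m1 * m2) \<otimes> (k1 \<otimes> k2) = c [^] (n2 * n1)"
    using conj_conj[OF 1(3) 2(3), of "a [^] (m1 * m2)"] abc by simp
  then show ?thesis
    unfolding commensurated_def using 1 2 abc by (metis m_closed mult_eq_0_iff)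
qed

lemma hom_integer_group_torsion:
  assumes "group H" "\<phi> \<in> hom H integer_group" "x \<in> carrier H"
    and "x [^]\<^bsub>H\<^esub> (n::nat) = \<one>\<^bsub>H\<^esub>" "n > 0"
  shows "\<phi> x = 0"
proof -
  have "int n * \<phi> x = \<phi> (x [^]\<^bsub>H\<^esub> n)"
    using hom_nat_pow[OF assms(2,3,1) group_integer_group] by simp
  also have "\<dots> = 0"
    using assms(4) hom_one[OF assms(2,1) group_integer_group] by simp
  finally show ?thesis
    using assms(5) by simp
qed

lemma primitive_exponent_hom:
  assumes "primitive G h"
  obtains F \<phi> where "subgroup F G" "finite F"
    "\<phi> \<in> hom (G\<lparr>carrier := Eplus G h\<rparr>) integer_group" "\<phi> h = 1"
    "\<forall>x\<in>Eplus G h. \<exists>f\<in>F. x = h [^] \<phi> x \<otimes> f"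
proof -
  have io: "infinite_order G h" and h: "h \<in> carrier G"
    using assms unfolding primitive_def infinite_order_def by auto
  obtain F where F: "subgroup F G" "finite F"
    and E: "Eplus G h = generate G {h} <#> F"
    and iso: "(\<lambda>(x, y). x \<otimes> y) \<in> iso (G\<lparr>carrier := generate G {h}\<rparr> \<times>\<times> G\<lparr>carrier := F\<rparr>)
                                     (G\<lparr>carrier := Eplus G h\<rparr>)"
    using assms unfolding primitive_def by blast
  have pow_mem: "h [^] (i::int) \<in> generate G {h}" for i
    unfolding generate_pow[OF h] by blast
  have decomp: "\<exists>i. \<exists>f\<in>F. x = h [^] (i::int) \<otimes> f" if "x \<in> Eplus G h" for x
    using that unfolding E set_mult_def generate_pow[OF h] by blast
  have unique: "i = j" if "f \<in> F" "f' \<in> F" "h [^] (i::int) \<otimes> f = h [^] (j::int) \<otimes> f'" for i j f f'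
  proof -
    have "inj_on (\<lambda>(x, y). x \<otimes> y) (generate G {h} \<times> F)"
      using iso unfolding iso_def bij_betw_def by simp
    then have "(h [^] i, f) = (h [^] j, f')"
      by (rule inj_onD) (use that pow_mem in auto)
    then have "h [^] (i - j) = \<one>"
      using h by (simp add: int_pow_diff)
    then show ?thesis
      using infinite_order_int_pow_eq_one_iff[OF io] by simp
  qed
  \<comment> \<open>the direct product structure makes the F-parts commute with powers of h\<close>
  have mult: "(h [^] (i::int) \<otimes> f) \<otimes> (h [^] (j::int) \<otimes> f') = h [^] (i + j) \<otimes> (f \<otimes> f')"
    if "f \<in> F" "f' \<in> F" for i j f f'
    using hom_mult[OF iso_imp_homomorphism[OF iso], of "(h [^] i, f)" "(h [^] j, f')"] that pow_mem h
    by (simp add: int_pow_mult)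
  define \<phi> where "\<phi> x = (THE i::int. \<exists>f\<in>F. x = h [^] i \<otimes> f)" for x
  have \<phi>_eq: "\<phi> (h [^] i \<otimes> f) = i" if "f \<in> F" for i f
    unfolding \<phi>_def using that unique by (intro the_equality) auto
  have \<phi>_decomp: "\<forall>x\<in>Eplus G h. \<exists>f\<in>F. x = h [^] \<phi> x \<otimes> f"
    using decomp \<phi>_eq by metis
  have "\<phi> h = 1"
    using \<phi>_eq[of \<one> 1] h subgroup.one_closed[OF F(1)] by simp
  moreover have "\<phi> \<in> hom (G\<lparr>carrier := Eplus G h\<rparr>) integer_group"
  proof (rule homI)
    fix x y assume "x \<in> carrier (G\<lparr>carrier := Eplus G h\<rparr>)" "y \<in> carrier (G\<lparr>carrier := Eplus G h\<rparr>)"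
    then obtain i j f f' where "f \<in> F" "f' \<in> F" "x = h [^] (i::int) \<otimes> f" "y = h [^] (j::int) \<otimes> f'"
      using decomp by (metis partial_object.select_convs(1) partial_object.surjective
          partial_object.update_convs(1))
    then show "\<phi> (x \<otimes>\<^bsub>G\<lparr>carrier := Eplus G h\<rparr>\<^esub> y) = \<phi> x \<otimes>\<^bsub>integer_group\<^esub> \<phi> y"
      using mult \<phi>_eq subgroup.m_closed[OF F(1)] by simp
  qed simp
  ultimately show ?thesis
    using that F \<phi>_decomp by blast
qed

lemma conj_mem_Eplus_of_conj_pow_eq:
  assumes k: "k \<in> carrier G" and h: "h \<in> carrier G" and h0: "h0 \<in> carrier G"
    and pq: "p \<noteq> 0" "q \<noteq> 0" and pow_eq: "inv k \<otimes> h [^] (p::int) \<otimes> k = h0 [^] (q::int)"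
  shows "inv k \<otimes> h \<otimes> k \<in> Eplus G h0" "k \<otimes> h0 \<otimes> inv k \<in> Eplus G h"
proof -
  show "inv k \<otimes> h \<otimes> k \<in> Eplus G h0"
    using mem_Eplus_of_pow_eq[OF _ pq(2)] pow_eq conj_int_pow[OF k h] k h by simp
  have "h [^] p = k \<otimes> h0 [^] q \<otimes> inv k"
    using conj_eq_iff[OF k, of "h [^] p" "h0 [^] q"] pow_eq h h0 by simp
  then have "(inv (inv k) \<otimes> h0 \<otimes> inv k) [^] q = h [^] p"
    using conj_int_pow[of "inv k" h0 q] h0 k by simp
  then show "k \<otimes> h0 \<otimes> inv k \<in> Eplus G h"
    using mem_Eplus_of_pow_eq[OF _ pq(1)] h0 k by simp
qed

lemma primitive_conj_root_in_Eplus: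
  assumes "commensurated G h h0" "primitive G h"
  obtains k j t where "k \<in> carrier G" "inv k \<otimes> h \<otimes> k \<in> Eplus G h0" "t \<in> Eplus G h0"
    "\<exists>n>0. t [^] (n::nat) = \<one>" "h0 = (inv k \<otimes> h \<otimes> k) [^] (j::int) \<otimes> t"
proof -
  obtain p q :: int and k where pq: "p \<noteq> 0" "q \<noteq> 0" and k: "k \<in> carrier G"
    and pow_eq: "inv k \<otimes> h [^] p \<otimes> k = h0 [^] q"
    using assms(1) unfolding commensurated_def by blast
  have h: "h \<in> carrier G" and h0: "h0 \<in> carrier G"
    using assms(1) unfolding commensurated_def by auto
  obtain F where F: "subgroup F G" "finite F" and E: "Eplus G h = generate G {h} <#> F"
    using assms(2) unfolding primitive_def by blast
  define h' where "h' = inv k \<otimes> h \<otimes> k"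
  have h'E: "h' \<in> Eplus G h0" and "k \<otimes> h0 \<otimes> inv k \<in> Eplus G h"
    unfolding h'_def using conj_mem_Eplus_of_conj_pow_eq[OF k h h0 pq pow_eq] by auto
  then obtain j f where f: "f \<in> F" and jf: "k \<otimes> h0 \<otimes> inv k = h [^] (j::int) \<otimes> f"
    unfolding E set_mult_def generate_pow[OF h] by auto
  have fc: "f \<in> carrier G"
    using f F(1) subgroup.subset by blast
  define t where "t = inv k \<otimes> f \<otimes> k"
  have h0_eq: "h0 = h' [^] j \<otimes> t"
  proof -
    have "h0 = inv k \<otimes> (h [^] j \<otimes> f) \<otimes> k"
      using conj_eq_iff[of "inv k" h0 "h [^] j \<otimes> f"] jf k h0 h fc by simp
    also have "\<dots> = (inv k \<otimes> h [^] j \<otimes> k) \<otimes> t"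
      unfolding t_def using hom_mult[OF conj_hom[OF k], of "h [^] j" f] h fc by simp
    finally show ?thesis
      unfolding h'_def using conj_int_pow[OF k h] by simp
  qed
  have sub: "subgroup (Eplus G h0) G"
    using Eplus_subgroup[OF h0] .
  have "t = inv (h' [^] j) \<otimes> h0"
    using h0_eq h k fc unfolding t_def h'_def by (simp add: m_assoc[symmetric])
  moreover have "h0 \<in> Eplus G h0"
    using mem_Eplus_of_pow_eq[OF h0, of "1::int" "1::int" h0] h0 by simp
  ultimately have tE: "t \<in> Eplus G h0"
    using subgroup_int_pow_closed[OF sub h'E, of j] sub
    by (metis subgroup.m_closed subgroup.m_inv_closed)
  obtain n :: nat where "n > 0" "f [^] n = \<one>"
    using finite_subgroup_elem_torsion[OF F f] by blast
  then have "\<exists>n>0. t [^] (n::nat) = \<one>"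
    unfolding t_def using conj_nat_pow[OF k fc] k by auto
  then show ?thesis
    using that k h'E tE h0_eq unfolding h'_def by blast
qed

lemma hom_integer_group_eq_pm1:
  assumes E: "subgroup E G" and \<phi>: "\<phi> \<in> hom (G\<lparr>carrier := E\<rparr>) integer_group"
    and "x \<in> E" "t \<in> E" "\<exists>n>0. t [^] (n::nat) = \<one>"
    and "\<phi> (x [^] (j::int) \<otimes> t) = 1"
  shows "\<phi> x = 1 \<or> \<phi> x = -1"
proof -
  interpret E: group "G\<lparr>carrier := E\<rparr>"
    using subgroup.subgroup_is_group[OF E is_group] .
  obtain n :: nat where "n > 0" "t [^] n = \<one>"
    using assms(5) by blast
  moreover have "t [^]\<^bsub>G\<lparr>carrier := E\<rparr>\<^esub> n = \<one>"
    using \<open>t [^] n = \<one>\<close> by (metis nat_pow_consistent)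
  ultimately have "\<phi> t = 0"
    using hom_integer_group_torsion[OF E.is_group \<phi>, of t n] assms(4) by simp
  moreover have "\<phi> (x [^] j) = j * \<phi> x"
    using hom_int_pow[OF \<phi> _ E.is_group group_integer_group, of x j] int_pow_consistent[OF E assms(3)]
      assms(3) by simp
  moreover have "\<phi> (x [^] j \<otimes> t) = \<phi> (x [^] j) + \<phi> t"
    using hom_mult[OF \<phi>, of "x [^] j" t] subgroup_int_pow_closed[OF E assms(3)] assms(4) by simp
  ultimately have "j * \<phi> x = 1"
    using assms(6) by simp
  then show ?thesis
    using zmult_eq_1_iff[of j "\<phi> x"] by auto
qed

lemma commensurated_primitive_conj:
  assumes "commensurated G h h0" "primitive G h"
    and \<phi>: "\<phi> \<in> hom (G\<lparr>carrier := Eplus G h0\<rparr>) integer_group" "\<phi> h0 = 1"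
    and decomp: "\<forall>x\<in>Eplus G h0. \<exists>f\<in>F0. x = h0 [^] \<phi> x \<otimes> f"
  shows "\<exists>k\<in>carrier G. \<exists>f\<in>F0. inv k \<otimes> h \<otimes> k \<in> {h0 \<otimes> f, inv h0 \<otimes> f}"
proof -
  obtain k j t where k: "k \<in> carrier G" and h'E: "inv k \<otimes> h \<otimes> k \<in> Eplus G h0"
    and t: "t \<in> Eplus G h0" "\<exists>n>0. t [^] (n::nat) = \<one>"
    and h0_eq: "h0 = (inv k \<otimes> h \<otimes> k) [^] (j::int) \<otimes> t"
    by (rule primitive_conj_root_in_Eplus[OF assms(1,2)])
  define h' where "h' = inv k \<otimes> h \<otimes> k"
  have h0: "h0 \<in> carrier G"
    using assms(1) unfolding commensurated_def by simp
  have "\<phi> h' = 1 \<or> \<phi> h' = -1"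
    using hom_integer_group_eq_pm1[OF Eplus_subgroup[OF h0] \<phi>(1) h'E t, of j] \<phi>(2) h0_eq
    unfolding h'_def by simp
  then have "h0 [^] \<phi> h' \<in> {h0, inv h0}"
    using h0 by (auto simp: int_pow_neg)
  moreover obtain f where "f \<in> F0" "h' = h0 [^] \<phi> h' \<otimes> f"
    using bspec[OF decomp h'E] unfolding h'_def by blast
  ultimately have "h' \<in> {h0 \<otimes> f, inv h0 \<otimes> f}"
    by auto
  then show ?thesis
    using k \<open>f \<in> F0\<close> unfolding h'_def by blast
qed

lemma primitive_commensurated_classes_bound:
  fixes g
  assumes bound: "\<And>H. subgroup H G \<Longrightarrow> finite H \<Longrightarrow> card H \<le> B"
  defines "C \<equiv> {conj_class G h | h. primitive G h \<and> commensurated G g h}"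
  shows "finite C \<and> card C \<le> 2 * B"
proof (cases "C = {}")
  case False
  then obtain h0 where h0: "primitive G h0" "commensurated G g h0"
    unfolding C_def by blast
  obtain F0 \<phi> where F0: "subgroup F0 G" "finite F0"
    and \<phi>: "\<phi> \<in> hom (G\<lparr>carrier := Eplus G h0\<rparr>) integer_group" "\<phi> h0 = 1"
    and decomp: "\<forall>x\<in>Eplus G h0. \<exists>f\<in>F0. x = h0 [^] \<phi> x \<otimes> f"
    by (rule primitive_exponent_hom[OF h0(1)])
  define R where "R = (\<lambda>f. h0 \<otimes> f) ` F0 \<union> (\<lambda>f. inv h0 \<otimes> f) ` F0"
  have C_sub: "C \<subseteq> conj_class G ` R"
  proof
    fix c assume "c \<in> C"
    then obtain h where h: "c = conj_class G h" "primitive G h" "commensurated G g h"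
      unfolding C_def by blast
    then have "commensurated G h h0"
      using commensurated_trans[OF commensurated_sym h0(2)] by blast
    then obtain k f where k: "k \<in> carrier G" and "f \<in> F0" "inv k \<otimes> h \<otimes> k \<in> {h0 \<otimes> f, inv h0 \<otimes> f}"
      using commensurated_primitive_conj[OF _ h(2) \<phi> decomp] by blast
    then have "inv k \<otimes> h \<otimes> k \<in> R"
      unfolding R_def by blast
    moreover have "c = conj_class G (inv k \<otimes> h \<otimes> k)"
      using conj_class_conj[OF k] h(1,3) unfolding commensurated_def by simp
    ultimately show "c \<in> conj_class G ` R"
      by blast
  qed
  have R: "finite R" "card R \<le> 2 * card F0"
    unfolding R_def using F0(2) card_Un_le[of "(\<lambda>f. h0 \<otimes> f) ` F0" "(\<lambda>f. inv h0 \<otimes> f) ` F0"]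
      card_image_le[OF F0(2), of "\<lambda>f. h0 \<otimes> f"] card_image_le[OF F0(2), of "\<lambda>f. inv h0 \<otimes> f"]
    by simp_all
  have "card C \<le> card (conj_class G ` R)"
    using C_sub R(1) by (simp add: card_mono)
  also have "\<dots> \<le> card R"
    using R(1) by (rule card_image_le)
  also have "\<dots> \<le> 2 * B"
    using R(2) bound[OF F0] by linarith
  finally show ?thesis
    using C_sub R(1) finite_subset by blast
qed simp

end

section \<open>Word metric and finite subgroups of hyperbolic groups\<close>

context group begin

lemma word_prod_closed: "set ws \<subseteq> carrier G \<Longrightarrow> word_prod G ws \<in> carrier G"
  by (induction ws) (auto simp: word_prod_def)

lemma word_prod_append:
  "set xs \<subseteq> carrier G \<Longrightarrow> set ys \<subseteq> carrier G \<Longrightarrow>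
     word_prod G (xs @ ys) = word_prod G xs \<otimes> word_prod G ys"
  by (induction xs) (auto simp: word_prod_def m_assoc word_prod_closed[unfolded word_prod_def])

lemma word_prod_rev_inv:
  "set ws \<subseteq> carrier G \<Longrightarrow> word_prod G (rev (map (\<lambda>z. inv z) ws)) = inv (word_prod G ws)"
proof (induction ws)
  case (Cons a ws)
  then have "word_prod G (rev (map (\<lambda>z. inv z) (a # ws))) = inv (word_prod G ws) \<otimes> inv a"
    using word_prod_append[of "rev (map (\<lambda>z. inv z) ws)" "[inv a]"] by (auto simp: word_prod_def)
  also have "\<dots> = inv (word_prod G (a # ws))"
    using Cons.prems word_prod_closed[of ws] by (simp add: word_prod_def inv_mult_group)
  finally show ?case .
qed (simp add: word_prod_def)

lemma generate_word_prod:
  assumes "S \<subseteq> carrier G" "x \<in> generate G S"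
  shows "\<exists>ws. set ws \<subseteq> S \<union> (\<lambda>s. inv s) ` S \<and> word_prod G ws = x"
  using assms(2)
proof (induction rule: generate.induct)
  case one
  show ?case by (intro exI[of _ "[]"]) (simp add: word_prod_def)
next
  case (incl h)
  then show ?case using assms(1) by (intro exI[of _ "[h]"]) (auto simp: word_prod_def)
next
  case (inv h)
  then show ?case using assms(1) by (intro exI[of _ "[inv h]"]) (auto simp: word_prod_def)
next
  case (eng h1 h2)
  then obtain w1 w2 where "set w1 \<subseteq> S \<union> (\<lambda>s. inv s) ` S" "word_prod G w1 = h1"
    "set w2 \<subseteq> S \<union> (\<lambda>s. inv s) ` S" "word_prod G w2 = h2" by blast
  moreover have "S \<union> (\<lambda>s. inv s) ` S \<subseteq> carrier G"
    using assms(1) by auto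
  ultimately show ?case
    using word_prod_append[of w1 w2] by (intro exI[of _ "w1 @ w2"]) auto
qed

end

locale word_metric = group G for G (structure) + fixes S
  assumes fin_gen: "finite_gen_set G S"
begin

definition letters :: "'a set" where
  "letters = S \<union> (\<lambda>s. inv s) ` S"

lemma letters_carrier: "letters \<subseteq> carrier G"
  using fin_gen unfolding finite_gen_set_def letters_def by auto

lemma finite_letters: "finite letters"
  using fin_gen unfolding finite_gen_set_def letters_def by simp

lemma inv_letter: "a \<in> letters \<Longrightarrow> inv a \<in> letters"
  using fin_gen unfolding finite_gen_set_def letters_def by (auto simp: image_iff subset_iff)

lemma word_length_witness:
  assumes "x \<in> carrier G"
  obtains ws where "length ws = word_length G S x" "set ws \<subseteq> letters" "word_prod G ws = x"
proof -
  have "\<exists>n ws. length ws = n \<and> set ws \<subseteq> letters \<and> word_prod G ws = x"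
    using generate_word_prod[of S x] assms fin_gen unfolding finite_gen_set_def letters_def by auto
  then have "\<exists>ws. length ws = word_length G S x \<and> set ws \<subseteq> letters \<and> word_prod G ws = x"
    unfolding word_length_def letters_def by (rule LeastI_ex)
  then show ?thesis
    using that by blast
qed

lemma word_length_le: "set ws \<subseteq> letters \<Longrightarrow> word_length G S (word_prod G ws) \<le> length ws"
  unfolding word_length_def letters_def by (rule Least_le) blast

lemma word_length_inv:
  assumes "x \<in> carrier G"
  shows "word_length G S (inv x) = word_length G S x"
proof -
  have le: "word_length G S (inv y) \<le> word_length G S y" if y: "y \<in> carrier G" for y
  proof -
    obtain w where w: "length w = word_length G S y" "set w \<subseteq> letters" "word_prod G w = y"
      using word_length_witness[OF y] .
    have "set (rev (map (\<lambda>z. inv z) w)) \<subseteq> letters"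
      using w(2) inv_letter by auto
    moreover have "word_prod G (rev (map (\<lambda>z. inv z) w)) = inv y"
      using word_prod_rev_inv w(2,3) letters_carrier by auto
    ultimately show ?thesis
      using word_length_le w(1) by fastforce
  qed
  show ?thesis
    using le[of x] le[of "inv x"] assms by simp
qed

lemma finite_word_length_ball: "finite {x \<in> carrier G. word_length G S x \<le> R}"
proof -
  have "{x \<in> carrier G. word_length G S x \<le> R} \<subseteq> word_prod G ` {ws. set ws \<subseteq> letters \<and> length ws \<le> R}"
  proof
    fix x assume x: "x \<in> {x \<in> carrier G. word_length G S x \<le> R}"
    then obtain ws where "length ws = word_length G S x" "set ws \<subseteq> letters" "word_prod G ws = x"
      using word_length_witness by blast
    then show "x \<in> word_prod G ` {ws. set ws \<subseteq> letters \<and> length ws \<le> R}"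
      using x by force
  qed
  then show ?thesis
    using finite_lists_length_le[OF finite_letters] finite_subset by blast
qed

definition wdist :: "'a \<Rightarrow> 'a \<Rightarrow> nat" where
  "wdist x y = word_length G S (inv x \<otimes> y)"

lemma word_dist_eq_wdist: "word_dist G S x y = real (wdist x y)"
  unfolding word_dist_def wdist_def ..

lemma wdist_commute:
  assumes "x \<in> carrier G" "y \<in> carrier G"
  shows "wdist x y = wdist y x"
proof -
  have "inv (inv x \<otimes> y) = inv y \<otimes> x"
    using assms by (simp add: inv_mult_group)
  then show ?thesis
    unfolding wdist_def using word_length_inv[of "inv x \<otimes> y"] assms by simp
qed

lemma wdist_mult_left:
  "g \<in> carrier G \<Longrightarrow> x \<in> carrier G \<Longrightarrow> y \<in> carrier G \<Longrightarrow> wdist (g \<otimes> x) (g \<otimes> y) = wdist x y"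
  unfolding wdist_def by (simp add: inv_mult_group m_assoc[symmetric]) (simp add: m_assoc)

lemma wdist_split:
  assumes x: "x \<in> carrier G" and y: "y \<in> carrier G" and "a \<le> wdist x y"
  obtains m where "m \<in> carrier G" "wdist x m \<le> a" "wdist m y \<le> wdist x y - a"
proof -
  obtain w where w: "length w = wdist x y" "set w \<subseteq> letters" "word_prod G w = inv x \<otimes> y"
    using word_length_witness[of "inv x \<otimes> y"] x y unfolding wdist_def by auto
  let ?u = "word_prod G (take a w)" and ?v = "word_prod G (drop a w)"
  have letters: "set (take a w) \<subseteq> letters" "set (drop a w) \<subseteq> letters"
    using w(2) set_take_subset set_drop_subset by fastforce+
  then have uv: "?u \<in> carrier G" "?v \<in> carrier G"
    using word_prod_closed letters_carrier by blast+
  have "?u \<otimes> ?v = inv x \<otimes> y"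
    using w(3) word_prod_append[of "take a w" "drop a w"] letters letters_carrier by (simp add: subset_trans)
  then have "inv (x \<otimes> ?u) \<otimes> y = inv ?u \<otimes> (?u \<otimes> ?v)"
    using x y uv by (simp add: inv_mult_group m_assoc)
  also have "\<dots> = ?v"
    using uv by (simp add: m_assoc[symmetric])
  finally have "inv (x \<otimes> ?u) \<otimes> y = ?v" .
  moreover have "inv x \<otimes> (x \<otimes> ?u) = ?u"
    using x uv by (simp add: m_assoc[symmetric])
  ultimately show ?thesis
    using that[of "x \<otimes> ?u"] word_length_le[OF letters(1)] word_length_le[OF letters(2)] w(1) x uv
    unfolding wdist_def by auto
qed

lemma exists_minimal_radius_center:
  assumes "finite H" "H \<noteq> {}"
  obtains x0 r where "x0 \<in> carrier G" "\<forall>h\<in>H. wdist x0 h \<le> r"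
    "\<And>x \<rho>. x \<in> carrier G \<Longrightarrow> \<forall>h\<in>H. real (wdist x h) \<le> \<rho> \<Longrightarrow> real r \<le> \<rho>"
proof -
  let ?P = "\<lambda>n. \<exists>x\<in>carrier G. \<forall>h\<in>H. wdist x h \<le> n"
  have "?P (Max (wdist \<one> ` H))"
    using assms(1) by (intro bexI[of _ \<one>]) auto
  then have "?P (LEAST n. ?P n)"
    by (rule LeastI)
  then obtain x0 where x0: "x0 \<in> carrier G" "\<forall>h\<in>H. wdist x0 h \<le> (LEAST n. ?P n)"
    by blast
  have "real (LEAST n. ?P n) \<le> \<rho>" if x: "x \<in> carrier G" and \<rho>: "\<forall>h\<in>H. real (wdist x h) \<le> \<rho>" for x \<rho>
  proof -
    have "wdist x h \<le> nat \<lfloor>\<rho>\<rfloor>" if "h \<in> H" for h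
    proof -
      have "int (wdist x h) \<le> \<lfloor>\<rho>\<rfloor>"
        using \<rho> that by (simp add: le_floor_iff)
      then show ?thesis
        by simp
    qed
    then have "(LEAST n. ?P n) \<le> nat \<lfloor>\<rho>\<rfloor>"
      using x by (intro Least_le) blast
    moreover obtain h where "h \<in> H"
      using assms(2) by blast
    then have "real (wdist x h) \<le> \<rho>"
      using \<rho> by blast
    ultimately show ?thesis
      by linarith
  qed
  then show ?thesis
    using that x0 by blast
qed

end

locale hyperbolic_word_metric = word_metric +
  fixes \<delta> :: real
  assumes four_point: "\<lbrakk>x \<in> carrier G; y \<in> carrier G; z \<in> carrier G; w \<in> carrier G\<rbrakk> \<Longrightarrow>
    gromov_prod G S w x z \<ge> min (gromov_prod G S w x y) (gromov_prod G S w y z) - \<delta>"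
begin

lemma midpoint_radius_le:
  assumes carrier: "x \<in> carrier G" "y \<in> carrier G" "m \<in> carrier G" "z \<in> carrier G"
    and mid: "wdist x m \<le> a" "wdist m y \<le> wdist x y - a" "2 * a \<le> wdist x y"
    and radius: "wdist x z \<le> r" "wdist y z \<le> r"
  shows "real (wdist m z) \<le> real r - real a + 2 * \<delta>"
proof -
  have gp: "gromov_prod G S w u v = (real (wdist u w) + real (wdist v w) - real (wdist u v)) / 2" for w u v
    unfolding gromov_prod_def word_dist_eq_wdist ..
  have sym: "wdist y m = wdist m y" "wdist z m = wdist m z" "wdist z y = wdist y z"
    using wdist_commute carrier by auto
  have "gromov_prod G S m x y \<ge> min (gromov_prod G S m x z) (gromov_prod G S m z y) - \<delta>"
    using four_point carrier by blast
  then have "gromov_prod G S m x z - \<delta> \<le> gromov_prod G S m x y \<or>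
             gromov_prod G S m z y - \<delta> \<le> gromov_prod G S m x y"
    by linarith
  moreover have "real (wdist m y) \<le> real (wdist x y) - real a" "real (wdist x m) \<le> real a"
    "2 * real a \<le> real (wdist x y)" "real (wdist x z) \<le> real r" "real (wdist y z) \<le> real r"
    using mid radius by linarith+
  ultimately show ?thesis
    unfolding gp sym by (elim disjE) argo+
qed

lemma finite_subgroup_displacement_le:
  assumes H: "subgroup H G" "finite H"
  obtains x0 where "x0 \<in> carrier G" "\<And>h. h \<in> H \<Longrightarrow> wdist x0 (h \<otimes> x0) \<le> nat \<lfloor>4 * \<delta> + 1\<rfloor>"
proof -
  have HG: "H \<subseteq> carrier G" and one: "\<one> \<in> H"
    using H(1) subgroup.subset subgroup.one_closed by blast+
  obtain x0 r where x0: "x0 \<in> carrier G" "\<forall>h\<in>H. wdist x0 h \<le> r"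
    and minimal: "\<And>x \<rho>. x \<in> carrier G \<Longrightarrow> \<forall>h\<in>H. real (wdist x h) \<le> \<rho> \<Longrightarrow> real r \<le> \<rho>"
    using exists_minimal_radius_center[OF H(2)] one by blast
  have "wdist x0 (h1 \<otimes> x0) \<le> nat \<lfloor>4 * \<delta> + 1\<rfloor>" if h1: "h1 \<in> H" for h1
  proof -
    define y where "y = h1 \<otimes> x0"
    define D where "D = wdist x0 y"
    define a where "a = D div 2"
    have y: "y \<in> carrier G"
      unfolding y_def using h1 HG x0(1) by auto
    \<comment> \<open>H permutes itself, so the translate y of the centre has the same radius\<close>
    have y_radius: "wdist y h \<le> r" if h: "h \<in> H" for h
    proof -
      have "h1 \<in> carrier G" "h \<in> carrier G"
        using h1 h HG by auto
      then have "wdist y h = wdist x0 (inv h1 \<otimes> h)"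
        unfolding y_def using wdist_mult_left[of h1 x0 "inv h1 \<otimes> h"] x0(1)
        by (simp add: m_assoc[symmetric])
      moreover have "inv h1 \<otimes> h \<in> H"
        using H(1) h1 h by (simp add: subgroup.m_closed subgroup.m_inv_closed)
      ultimately show ?thesis
        using x0(2) by simp
    qed
    obtain m where m: "m \<in> carrier G" "wdist x0 m \<le> a" "wdist m y \<le> D - a"
      using wdist_split[OF x0(1) y, of a] unfolding D_def a_def by auto
    have "\<forall>h\<in>H. real (wdist m h) \<le> real r - real a + 2 * \<delta>"
      using midpoint_radius_le[OF x0(1) y m(1)] m x0(2) y_radius HG unfolding D_def a_def by auto
    then have "real a \<le> 2 * \<delta>"
      using minimal[OF m(1)] by fastforce
    then have "real D \<le> 4 * \<delta> + 1"
      unfolding a_def by linarith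
    then have "int D \<le> \<lfloor>4 * \<delta> + 1\<rfloor>"
      by (subst le_floor_iff) simp
    then show ?thesis
      unfolding D_def y_def by (metis nat_int nat_mono)
  qed
  then show ?thesis
    using that x0(1) by blast
qed

lemma card_finite_subgroup_le:
  assumes "subgroup H G" "finite H"
  shows "card H \<le> card {x \<in> carrier G. word_length G S x \<le> nat \<lfloor>4 * \<delta> + 1\<rfloor>}"
proof -
  obtain x0 where x0: "x0 \<in> carrier G" "\<And>h. h \<in> H \<Longrightarrow> wdist x0 (h \<otimes> x0) \<le> nat \<lfloor>4 * \<delta> + 1\<rfloor>"
    using finite_subgroup_displacement_le[OF assms] by blast
  have HG: "H \<subseteq> carrier G"
    using assms(1) subgroup.subset by blast
  have "inj_on (\<lambda>h. inv x0 \<otimes> h \<otimes> x0) H"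
    using HG x0(1) by (intro inj_onI) (auto simp: m_assoc subset_iff)
  moreover have "(\<lambda>h. inv x0 \<otimes> h \<otimes> x0) ` H \<subseteq> {x \<in> carrier G. word_length G S x \<le> nat \<lfloor>4 * \<delta> + 1\<rfloor>}"
    using x0 HG unfolding wdist_def by (auto simp: m_assoc)
  ultimately show ?thesis
    using card_inj_on_le finite_word_length_ball by blast
qed

end

lemma hyperbolic_group_finite_subgroups_bounded:
  assumes "hyperbolic_group G"
  obtains B where "\<And>H. subgroup H G \<Longrightarrow> finite H \<Longrightarrow> card H \<le> B"
proof -
  obtain S \<delta> where "group G" "finite_gen_set G S"
    and "\<forall>x\<in>carrier G. \<forall>y\<in>carrier G. \<forall>z\<in>carrier G. \<forall>w\<in>carrier G.
        gromov_prod G S w x z \<ge> min (gromov_prod G S w x y) (gromov_prod G S w y z) - \<delta>"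
    using assms unfolding hyperbolic_group_def by blast
  then interpret hyperbolic_word_metric G S \<delta>
    by (simp add: hyperbolic_word_metric_def hyperbolic_word_metric_axioms_def word_metric_def
        word_metric_axioms_def)
  show ?thesis
    using that card_finite_subgroup_le by blast
qed

theorem lemma4p10:
  fixes G :: "('a, 'b) monoid_scheme" and M :: nat and g :: 'a
  assumes "non_elementary_hyperbolic G"
    and "M = Max {card H | H. subgroup H G \<and> finite H}"
    and "infinite_order G g"
  shows "finite {conj_class G h | h. primitive G h \<and> commensurated G g h}
       \<and> card {conj_class G h | h. primitive G h \<and> commensurated G g h} \<le> 2 * M"
proof -
  have hyp: "hyperbolic_group G" and grp: "group G"
    using assms(1) unfolding non_elementary_hyperbolic_def hyperbolic_group_def by auto
  obtain B where B: "\<And>H. subgroup H G \<Longrightarrow> finite H \<Longrightarrow> card H \<le> B"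
    using hyperbolic_group_finite_subgroups_bounded[OF hyp] by blast
  have "finite {card H | H. subgroup H G \<and> finite H}"
    by (rule finite_subset[of _ "{..B}"]) (auto dest: B)
  then have "card H \<le> M" if "subgroup H G" "finite H" for H
    unfolding assms(2) using that by (intro Max_ge) auto
  then show ?thesis
    using group.primitive_commensurated_classes_bound[OF grp] by blast
qed

end
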